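(* Let $S\subset\mathbb{R}^d$ be compact, let $P_\epsilon$ be a probability measure on $\mathbb{R}^d$ with $\mathbb{E}_{P_\epsilon}[\epsilon]=0$, and let $$\mathcal{P}_\epsilon:=\{P\in\mathcal{P}: P\text{ is the law of }\hat x+\epsilon\text{ for some }\hat x\in S,\ \epsilon\sim P_\epsilon\}.$$ Let $k:\mathbb{R}^d\times\mathbb{R}^d\to\mathbb{R}$ be a continuous bounded translation-invariant positive-definite kernel with $k(x,x)\le1$, and fix $\lambda>0$. Then for all $n\ge1$, $\tilde\gamma_n(\mathcal P_\epsilon)\le\gamma_n$.
   Context: $\mathcal{P}$ is the set of Borel probability measures on $\mathbb{R}^d$; $\mu_P:=\int k(\cdot,x)\,dP(x)$; $\tilde k(P,P'):=\langle\mu_P,\mu_{P'}\rangle_k=\iint k(x,x')\,dP(x)dP'(x')$. For a subset $\mathcal{R}\subset\mathcal{P}$ of size $n$, $\tilde{\mathbf K}_{\mathcal R}=[\tilde k(P,P')]_{P,P'\in\mathcal R}$ and $\tilde\gamma_n(\mathcal P_\epsilon):=\sup_{\mathcal R\subset\mathcal P_\epsilon,|\mathcal R|=n}\frac12\log|I+\lambda^{-1}\tilde{\mathbf K}_{\mathcal R}|$. For $A\subset S$ of size $n$, $\mathbf K_A=[k(x,x')]_{x,x'\in A}$ and $\gamma_n:=\max_{A\subset S,|A|=n}\frac12\log|I+\lambda^{-1}\mathbf K_A|$ (maximum information gain of $\mathrm{GP}(0,k)$ on $S$), with the same $\lambda$. *)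

theory Defs
  imports "HOL-Probability.Probability"
begin

definition set_det :: "'a set \<Rightarrow> ('a \<Rightarrow> 'a \<Rightarrow> real) \<Rightarrow> real" where
  "set_det R M = (\<Sum>p\<in>{p. p permutes R}. of_int (sign p) * (\<Prod>i\<in>R. M i (p i)))"

definition info_gain :: "('a \<Rightarrow> 'a \<Rightarrow> real) \<Rightarrow> real \<Rightarrow> 'a set \<Rightarrow> real" where
  "info_gain K lam R = 1/2 * ln (set_det R (\<lambda>x y. (if x = y then 1 else 0) + K x y / lam))"

text \<open>Maximum information gain over subsets of size n of a set X (supremum in ereal;
  the empty supremum is -infinity).\<close>
definition max_info_gain :: "('a \<Rightarrow> 'a \<Rightarrow> real) \<Rightarrow> real \<Rightarrow> 'a set \<Rightarrow> nat \<Rightarrow> ereal" where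
  "max_info_gain K lam X n = (SUP A\<in>{A. A \<subseteq> X \<and> finite A \<and> card A = n}. ereal (info_gain K lam A))"

text \<open>Positive-definite (i.e. symmetric positive semidefinite) kernel.\<close>
definition pd_kernel :: "('a \<Rightarrow> 'a \<Rightarrow> real) \<Rightarrow> bool" where
  "pd_kernel k \<longleftrightarrow> (\<forall>x y. k x y = k y x) \<and>
     (\<forall>n (x::nat \<Rightarrow> 'a) (c::nat \<Rightarrow> real). (\<Sum>i<n. \<Sum>j<n. c i * c j * k (x i) (x j)) \<ge> 0)"

definition translation_invariant :: "('a::ab_group_add \<Rightarrow> 'a \<Rightarrow> real) \<Rightarrow> bool" where
  "translation_invariant k \<longleftrightarrow> (\<exists>\<psi>. \<forall>x y. k x y = \<psi> (x - y))"

definition kme :: "('a \<Rightarrow> 'a \<Rightarrow> real) \<Rightarrow> 'a measure \<Rightarrow> 'a measure \<Rightarrow> real" where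
  "kme k P Q = (\<integral>x. (\<integral>y. k x y \<partial>Q) \<partial>P)"

definition noisy_laws :: "('a::euclidean_space) set \<Rightarrow> 'a measure \<Rightarrow> 'a measure set" where
  "noisy_laws S Peps = {P. \<exists>xh\<in>S. P = distr Peps borel (\<lambda>e. xh + e)}"

end

theory Submission
  imports Defs "Jordan_Normal_Form.Determinant"
begin

text \<open>Let \<open>x\<^sub>Q \<in> S\<close> be the centre of a noisy law \<open>Q \<in> \<R>\<close> and \<open>A = {x\<^sub>Q | Q \<in> \<R>}\<close>. For coefficients \<open>c\<close>, the quadratic form
  \<open>c\<^sup>T K\<^sub>\<R> c\<close> of the mean-embedding kernel is the double integral over independent noises
  \<open>u, v\<close> of \<open>H(u, v) = \<Sum>\<^sub>i\<^sub>j c\<^sub>i c\<^sub>j k(x\<^sub>i + u, x\<^sub>j + v)\<close>. This \<open>H\<close> is again a positive-definite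
  kernel, and by translation invariance its diagonal is constantly \<open>H(0, 0) = c\<^sup>T K\<^sub>A c\<close>. Hence
  \<open>H(u, v) \<le> H(0, 0)\<close>, and \<open>\<integral>\<integral>H \<ge> 0\<close> because \<open>m H(0, 0) + m (m - 1) \<integral>\<integral>H\<close> is the expectation of
  \<open>\<Sum>\<^sub>a\<^sub>,\<^sub>b\<^sub>\<le>\<^sub>m H(Y\<^sub>a, Y\<^sub>b) \<ge> 0\<close> for i.i.d. noises \<open>Y\<^sub>a\<close>. So \<open>0 \<le> K\<^sub>\<R> \<le> K\<^sub>A\<close> in the Loewner order, and the
  determinant is monotone there (by induction on the dimension via Schur complements).\<close>

lemma set_det_cong:
  assumes "\<And>i j. i \<in> X \<Longrightarrow> j \<in> X \<Longrightarrow> M i j = N i j"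
  shows "set_det X M = set_det X N"
  unfolding set_det_def
proof (intro sum.cong refl arg_cong2[where f="(*)"] prod.cong)
  fix p i assume "p \<in> {p. p permutes X}" "i \<in> X"
  then show "M i (p i) = N i (p i)" using assms permutes_in_image by fastforce
qed

lemma set_det_reindex:
  assumes h: "bij_betw h X Y" and fin: "finite X"
  shows "set_det Y M = set_det X (\<lambda>i j. M (h i) (h j))"
proof -
  let ?mp = "map_permutation X h"
  have inj: "inj_on h X" using h by (auto simp: bij_betw_def)
  obtain h' where h': "bij_betw h' Y X" "\<And>x. x \<in> X \<Longrightarrow> h' (h x) = x" "\<And>y. y \<in> Y \<Longrightarrow> h (h' y) = y"
    using h bij_betw_inv_into bij_betw_inv_into_left bij_betw_inv_into_right by metis
  have bij: "bij_betw ?mp {p. p permutes X} {q. q permutes Y}"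
  proof (rule bij_betw_byWitness[where f' = "map_permutation Y h'"])
    show "\<forall>a\<in>{p. p permutes X}. map_permutation Y h' (?mp a) = a"
      using map_permutation_compose_inv[OF h _ h'(2)] by auto
    show "\<forall>a\<in>{q. q permutes Y}. ?mp (map_permutation Y h' a) = a"
      using map_permutation_compose_inv[OF h'(1) _ h'(3)] by auto
    show "?mp ` {p. p permutes X} \<subseteq> {q. q permutes Y}"
      using map_permutation_permutes[OF h] by auto
    show "map_permutation Y h' ` {q. q permutes Y} \<subseteq> {p. p permutes X}"
      using map_permutation_permutes[OF h'(1)] by auto
  qed
  have "set_det Y M = (\<Sum>p\<in>{p. p permutes X}. of_int (sign (?mp p)) * (\<Prod>y\<in>Y. M y (?mp p y)))"
    unfolding set_det_def by (rule sum.reindex_bij_betw[OF bij, symmetric])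
  also have "\<dots> = (\<Sum>p\<in>{p. p permutes X}. of_int (sign p) * (\<Prod>x\<in>X. M (h x) (h (p x))))"
  proof (rule sum.cong[OF refl])
    fix p assume p: "p \<in> {p. p permutes X}"
    have "sign (?mp p) = sign p" using sign_map_permutation[OF inj _ fin] p by auto
    moreover have "(\<Prod>y\<in>Y. M y (?mp p y)) = (\<Prod>x\<in>X. M (h x) (?mp p (h x)))"
      by (rule prod.reindex_bij_betw[OF h, symmetric])
    moreover have "\<And>x. x \<in> X \<Longrightarrow> ?mp p (h x) = h (p x)"
      using map_permutation_apply[OF inj] by auto
    ultimately show "of_int (sign (?mp p)) * (\<Prod>y\<in>Y. M y (?mp p y))
        = of_int (sign p) * (\<Prod>x\<in>X. M (h x) (h (p x)))"
      by simp
  qed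
  finally show ?thesis unfolding set_det_def .
qed

lemma det_mat_eq_set_det: "det (mat n n f) = set_det {0..<n} (\<lambda>i j. f (i, j))"
proof -
  have "det (mat n n f)
      = (\<Sum>p | p permutes {0..<n}. of_int (sign p) * (\<Prod>i = 0..<n. mat n n f $$ (i, p i)))"
    by (rule det_def') auto
  also have "\<dots> = set_det {0..<n} (\<lambda>i j. f (i, j))"
    unfolding set_det_def
  proof (rule sum.cong[OF refl])
    fix p assume "p \<in> {p. p permutes {0..<n}}"
    then have "\<And>i. i < n \<Longrightarrow> p i < n" using permutes_in_image by fastforce
    then show "of_int (sign p) * (\<Prod>i = 0..<n. mat n n f $$ (i, p i))
        = of_int (sign p) * (\<Prod>i\<in>{0..<n}. f (i, p i))"
      by (auto intro!: prod.cong)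
  qed
  finally show ?thesis .
qed

definition schur_complement :: "nat \<Rightarrow> real mat \<Rightarrow> real mat" where
  "schur_complement n A = mat n n (\<lambda>(i,j). A $$ (i,j) - A $$ (i,n) * A $$ (n,j) / A $$ (n,n))"

lemma schur_complement_carrier: "schur_complement n A \<in> carrier_mat n n"
  unfolding schur_complement_def by auto

lemma det_schur_complement:
  assumes A: "A \<in> carrier_mat (Suc n) (Suc n)" and a: "A $$ (n,n) \<noteq> 0"
  shows "det A = A $$ (n,n) * det (schur_complement n A)"
proof -
  txt \<open>Left multiplication by \<open>E\<close> clears column \<open>n\<close> above the pivot using row \<open>n\<close>.\<close>
  define E where "E = mat (Suc n) (Suc n)
    (\<lambda>(i,j). if i = j then 1 else if j = n then - A $$ (i,n) / A $$ (n,n) else (0::real))"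
  have E: "E \<in> carrier_mat (Suc n) (Suc n)" unfolding E_def by auto
  have "upper_triangular E" unfolding E_def upper_triangular_def by auto
  moreover have "diag_mat E = replicate (Suc n) 1"
    by (rule nth_equalityI) (simp_all add: E_def diag_mat_def del: upt_Suc replicate_Suc)
  ultimately have det_E: "det E = 1" using det_upper_triangular[OF _ E] by simp
  define C where "C = E * A"
  have C: "C \<in> carrier_mat (Suc n) (Suc n)" unfolding C_def using E A by auto
  have C_entry: "C $$ (i,j) = (if i = n then A $$ (n,j)
      else A $$ (i,j) - A $$ (i,n) / A $$ (n,n) * A $$ (n,j))"
    if "i < Suc n" "j < Suc n" for i j
  proof -
    have "C $$ (i,j) = (\<Sum>k<Suc n. E $$ (i,k) * A $$ (k,j))"
      unfolding C_def using that E A by (simp add: scalar_prod_def atLeast0LessThan)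
    also have "\<dots> = (\<Sum>k<Suc n. (if k = i then A $$ (k,j) else 0)
        + (if k = n \<and> i \<noteq> n then - A $$ (i,n) / A $$ (n,n) * A $$ (k,j) else 0))"
      using that by (intro sum.cong) (auto simp: E_def)
    also have "\<dots> = A $$ (i,j) + (if i \<noteq> n then - A $$ (i,n) / A $$ (n,n) * A $$ (n,j) else 0)"
      using that by (simp add: sum.distrib)
    finally show ?thesis by auto
  qed
  have "det A = det C"
    unfolding C_def det_mult[OF E A] det_E by simp
  also have "\<dots> = (\<Sum>i<Suc n. C $$ (i,n) * cofactor C i n)"
    by (rule laplace_expansion_column[OF C]) auto
  also have "\<dots> = A $$ (n,n) * cofactor C n n"
    using a by (simp add: C_entry)
  also have "mat_delete C n n = schur_complement n A"
    by (rule eq_matI) (use C in \<open>auto simp: mat_delete_def schur_complement_def C_entry\<close>)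
  then have "cofactor C n n = det (schur_complement n A)"
    by (simp add: cofactor_def)
  finally show ?thesis .
qed

definition quad_form :: "nat \<Rightarrow> real mat \<Rightarrow> (nat \<Rightarrow> real) \<Rightarrow> real" where
  "quad_form n A c = (\<Sum>i<n. \<Sum>j<n. c i * c j * A $$ (i,j))"

text \<open>Completing the square in the last coordinate.\<close>
lemma quad_form_schur_complement:
  assumes sym: "\<And>i j. i < Suc n \<Longrightarrow> j < Suc n \<Longrightarrow> A $$ (i,j) = A $$ (j,i)"
    and a: "A $$ (n,n) \<noteq> 0"
  shows "quad_form (Suc n) A (c(n:=t)) = quad_form n (schur_complement n A) c
    + A $$ (n,n) * (t + (\<Sum>i<n. c i * A $$ (i,n)) / A $$ (n,n))^2"
proof -
  define a where "a = A $$ (n,n)"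
  define s where "s = (\<Sum>i<n. c i * A $$ (i,n))"
  have s_row: "(\<Sum>j<n. c j * A $$ (n,j)) = s"
    unfolding s_def using sym by (intro sum.cong) auto
  have "quad_form (Suc n) A (c(n:=t)) = quad_form n A c + (\<Sum>i<n. c i * t * A $$ (i,n))
      + (\<Sum>j<n. t * c j * A $$ (n,j)) + t * t * a"
    unfolding quad_form_def a_def by (simp add: sum.distrib)
  also have "\<dots> = quad_form n A c + 2 * t * s + t^2 * a"
  proof -
    have "(\<Sum>i<n. c i * t * A $$ (i,n)) = t * s"
      unfolding s_def sum_distrib_left by (intro sum.cong) auto
    moreover have "(\<Sum>j<n. t * c j * A $$ (n,j)) = t * s"
      unfolding s_row[symmetric] sum_distrib_left by (intro sum.cong) auto
    ultimately show ?thesis by (simp add: power2_eq_square)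
  qed
  finally have ext: "quad_form (Suc n) A (c(n:=t)) = quad_form n A c + 2 * t * s + t^2 * a" .
  have "quad_form n (schur_complement n A) c
      = (\<Sum>i<n. \<Sum>j<n. c i * c j * A $$ (i,j) - (c i * A $$ (i,n)) * (c j * A $$ (n,j)) / a)"
    unfolding quad_form_def schur_complement_def a_def by (intro sum.cong) (auto simp: algebra_simps)
  also have "\<dots> = quad_form n A c - s * s / a"
  proof -
    have "s * s = (\<Sum>i<n. c i * A $$ (i,n)) * (\<Sum>j<n. c j * A $$ (n,j))"
      unfolding s_row s_def ..
    then show ?thesis by (simp add: quad_form_def sum_subtractf sum_product sum_divide_distrib)
  qed
  finally have schur: "quad_form n (schur_complement n A) c = quad_form n A c - s * s / a" .
  show ?thesis unfolding ext schur a_def[symmetric] s_def[symmetric] using a[folded a_def]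
    by (simp add: field_simps power2_eq_square)
qed

lemma det_mono_quad_form:
  assumes "A \<in> carrier_mat n n" "B \<in> carrier_mat n n"
    and "\<And>i j. i < n \<Longrightarrow> j < n \<Longrightarrow> A $$ (i,j) = A $$ (j,i)"
    and "\<And>i j. i < n \<Longrightarrow> j < n \<Longrightarrow> B $$ (i,j) = B $$ (j,i)"
    and "\<And>c. (\<exists>i<n. c i \<noteq> 0) \<Longrightarrow> 0 < quad_form n A c"
    and "\<And>c. quad_form n A c \<le> quad_form n B c"
  shows "0 < det A \<and> det A \<le> det B"
  using assms
proof (induction n arbitrary: A B)
  case 0
  then show ?case by simp
next
  case (Suc n)
  define a where "a = A $$ (n,n)"
  define b where "b = B $$ (n,n)"
  let ?e = "\<lambda>i. if i = n then 1 else 0 :: real"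
  have "quad_form (Suc n) A ?e = a" "quad_form (Suc n) B ?e = b"
    unfolding quad_form_def a_def b_def by (simp_all add: if_distrib[of "\<lambda>x. x * _"] cong: if_cong)
  then have a: "0 < a" and ab: "a \<le> b"
    using Suc.prems(5)[of ?e] Suc.prems(6)[of ?e] by auto
  then have b: "0 < b" by simp
  note square_A = quad_form_schur_complement[of n A, OF Suc.prems(3), folded a_def]
  note square_B = quad_form_schur_complement[of n B, OF Suc.prems(4), folded b_def]
  have IH: "0 < det (schur_complement n A) \<and> det (schur_complement n A) \<le> det (schur_complement n B)"
  proof (rule Suc.IH[OF schur_complement_carrier schur_complement_carrier])
    fix i j assume "i < n" "j < n"
    then show "schur_complement n A $$ (i,j) = schur_complement n A $$ (j,i)"
      "schur_complement n B $$ (i,j) = schur_complement n B $$ (j,i)"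
      using Suc.prems(3,4) by (auto simp: schur_complement_def)
  next
    fix c :: "nat \<Rightarrow> real" assume "\<exists>i<n. c i \<noteq> 0"
    then have "\<exists>i<Suc n. (c(n := - (\<Sum>i<n. c i * A $$ (i,n)) / a)) i \<noteq> 0" by auto
    from Suc.prems(5)[OF this] square_A[of c "- (\<Sum>i<n. c i * A $$ (i,n)) / a"] a
    show "0 < quad_form n (schur_complement n A) c" by (simp add: fun_upd_def)
  next
    fix c :: "nat \<Rightarrow> real"
    define t where "t = - (\<Sum>i<n. c i * B $$ (i,n)) / b"
    have "quad_form n (schur_complement n A) c \<le> quad_form (Suc n) A (c(n:=t))"
      using square_A[of c t] a by simp
    also have "\<dots> \<le> quad_form (Suc n) B (c(n:=t))" by (rule Suc.prems(6))
    also have "\<dots> = quad_form n (schur_complement n B) c" using square_B[of c t] b by (simp add: t_def)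
    finally show "quad_form n (schur_complement n A) c \<le> quad_form n (schur_complement n B) c" .
  qed
  have "det A = a * det (schur_complement n A)" "det B = b * det (schur_complement n B)"
    using det_schur_complement[OF Suc.prems(1)] det_schur_complement[OF Suc.prems(2)] a b
    by (simp_all add: a_def b_def)
  then show ?case using IH a ab by (auto intro: mult_mono)
qed

lemma quad_form_one_plus_gram:
  "quad_form n (mat n n (\<lambda>(i,j). (if i = j then 1 else 0) + K i j / lam)) c
     = (\<Sum>i<n. c i * c i) + (\<Sum>i<n. \<Sum>j<n. c i * c j * K i j) / lam"
proof -
  have "quad_form n (mat n n (\<lambda>(i,j). (if i = j then 1 else 0) + K i j / lam)) c
      = (\<Sum>i<n. \<Sum>j<n. (if i = j then c i * c j else 0) + c i * c j * K i j / lam)"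
    unfolding quad_form_def by (intro sum.cong refl) (auto simp: algebra_simps)
  also have "\<dots> = (\<Sum>i<n. c i * c i) + (\<Sum>i<n. \<Sum>j<n. c i * c j * K i j) / lam"
    by (simp add: sum.distrib sum_divide_distrib)
  finally show ?thesis .
qed

lemma info_gain_reindex:
  assumes "inj_on g R" "finite R"
  shows "info_gain k lam (g ` R) = info_gain (\<lambda>a b. k (g a) (g b)) lam R"
proof -
  have "bij_betw g R (g ` R)" using assms(1) by (rule inj_on_imp_bij_betw)
  then have "set_det (g ` R) (\<lambda>x y. (if x = y then 1 else 0) + k x y / lam)
      = set_det R (\<lambda>a b. (if g a = g b then 1 else 0) + k (g a) (g b) / lam)"
    using assms(2) by (rule set_det_reindex)
  also have "\<dots> = set_det R (\<lambda>a b. (if a = b then 1 else 0) + k (g a) (g b) / lam)"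
    using assms(1) by (intro set_det_cong) (auto dest: inj_onD)
  finally show ?thesis unfolding info_gain_def by simp
qed

lemma set_det_one_plus_gram_eq_det:
  assumes h: "bij_betw h {0..<n} R"
  shows "set_det R (\<lambda>a b. (if a = b then 1 else 0) + M a b / lam)
    = det (mat n n (\<lambda>(i,j). (if i = j then 1 else 0) + M (h i) (h j) / lam))"
proof -
  have "h i = h j \<longleftrightarrow> i = j" if "i < n" "j < n" for i j
    using h that by (auto simp: bij_betw_def inj_on_def)
  then show ?thesis
    unfolding det_mat_eq_set_det set_det_reindex[OF h finite_atLeastLessThan]
    by (intro set_det_cong) simp
qed

lemma quad_form_reindex:
  fixes c :: "nat \<Rightarrow> real" and M :: "'a \<Rightarrow> 'a \<Rightarrow> real"
  assumes h: "bij_betw h {0..<n} R"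
  shows "(\<Sum>i<n. \<Sum>j<n. c i * c j * M (h i) (h j))
    = (\<Sum>a\<in>R. \<Sum>b\<in>R. c (inv_into {0..<n} h a) * c (inv_into {0..<n} h b) * M a b)"
proof -
  have "c (inv_into {0..<n} h (h i)) = c i" if "i < n" for i
    using h that by (simp add: bij_betw_def)
  then show ?thesis
    unfolding sum.reindex_bij_betw[OF h, symmetric] by (simp add: atLeast0LessThan)
qed

lemma info_gain_mono:
  fixes K L :: "'a \<Rightarrow> 'a \<Rightarrow> real"
  assumes R: "finite R" and lam: "lam > 0"
    and K_sym: "\<And>a b. a \<in> R \<Longrightarrow> b \<in> R \<Longrightarrow> K a b = K b a"
    and L_sym: "\<And>a b. a \<in> R \<Longrightarrow> b \<in> R \<Longrightarrow> L a b = L b a"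
    and K_nonneg: "\<And>c. 0 \<le> (\<Sum>a\<in>R. \<Sum>b\<in>R. c a * c b * K a b)"
    and K_le_L: "\<And>c. (\<Sum>a\<in>R. \<Sum>b\<in>R. c a * c b * K a b) \<le> (\<Sum>a\<in>R. \<Sum>b\<in>R. c a * c b * L a b)"
  shows "info_gain K lam R \<le> info_gain L lam R"
proof -
  define n where "n = card R"
  obtain h where h: "bij_betw h {0..<n} R" using ex_bij_betw_nat_finite[OF R] n_def by blast
  define gram where "gram M = mat n n (\<lambda>(i,j). (if i = j then 1 else 0) + M (h i) (h j) / lam)"
    for M :: "'a \<Rightarrow> 'a \<Rightarrow> real"
  let ?c' = "\<lambda>c a. c (inv_into {0..<n} h a)"
  have "0 < det (gram K) \<and> det (gram K) \<le> det (gram L)"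
  proof (rule det_mono_quad_form)
    show "gram K \<in> carrier_mat n n" "gram L \<in> carrier_mat n n" unfolding gram_def by auto
    fix i j assume "i < n" "j < n"
    then show "gram K $$ (i,j) = gram K $$ (j,i)" "gram L $$ (i,j) = gram L $$ (j,i)"
      unfolding gram_def using K_sym L_sym bij_betwE[OF h] by auto
  next
    fix c :: "nat \<Rightarrow> real" assume "\<exists>i<n. c i \<noteq> 0"
    then obtain i where "i < n" "c i \<noteq> 0" by blast
    then have "0 < (\<Sum>i<n. c i * c i)"
      by (intro sum_pos2[of _ i]) (auto simp: zero_less_mult_iff linorder_neq_iff)
    moreover have "0 \<le> (\<Sum>i<n. \<Sum>j<n. c i * c j * K (h i) (h j)) / lam"
      using K_nonneg[of "?c' c"] lam by (simp add: quad_form_reindex[OF h])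
    ultimately show "0 < quad_form n (gram K) c"
      unfolding gram_def quad_form_one_plus_gram by linarith
  next
    fix c :: "nat \<Rightarrow> real"
    have "(\<Sum>i<n. \<Sum>j<n. c i * c j * K (h i) (h j)) / lam
        \<le> (\<Sum>i<n. \<Sum>j<n. c i * c j * L (h i) (h j)) / lam"
      using K_le_L[of "?c' c"] lam by (simp add: quad_form_reindex[OF h] divide_right_mono)
    then show "quad_form n (gram K) c \<le> quad_form n (gram L) c"
      unfolding gram_def quad_form_one_plus_gram by linarith
  qed
  then show ?thesis
    unfolding info_gain_def set_det_one_plus_gram_eq_det[OF h] gram_def[symmetric] by simp
qed

lemma pd_kernel_sum_nonneg:
  assumes pd: "pd_kernel k" and T: "finite T"
  shows "0 \<le> (\<Sum>t\<in>T. \<Sum>s\<in>T. c t * c s * k (y t) (y s))"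
proof -
  obtain h where h: "bij_betw h {..<card T} T"
    using ex_bij_betw_nat_finite[OF T] by (auto simp: atLeast0LessThan)
  have "0 \<le> (\<Sum>i<card T. \<Sum>j<card T. c (h i) * c (h j) * k (y (h i)) (y (h j)))"
    using pd unfolding pd_kernel_def by (elim conjE allE[of _ "card T"] allE[of _ "y \<circ> h"] allE[of _ "c \<circ> h"]) simp
  also have "\<dots> = (\<Sum>i<card T. \<Sum>s\<in>T. c (h i) * c s * k (y (h i)) (y s))"
    by (intro sum.cong refl sum.reindex_bij_betw[OF h])
  also have "\<dots> = (\<Sum>t\<in>T. \<Sum>s\<in>T. c t * c s * k (y t) (y s))"
    by (rule sum.reindex_bij_betw[OF h])
  finally show ?thesis .
qed

lemma pd_kernel_le_diag:
  assumes "pd_kernel H"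
  shows "2 * H u v \<le> H u u + H v v"
proof -
  have "0 \<le> (\<Sum>t\<in>{0, 1::nat}. \<Sum>s\<in>{0, 1::nat}. (\<lambda>i. if i = 0 then 1 else - 1) t
      * (\<lambda>i. if i = 0 then 1 else - 1) s
      * H ((\<lambda>i. if i = 0 then u else v) t) ((\<lambda>i. if i = 0 then u else v) s))"
    by (rule pd_kernel_sum_nonneg[OF assms]) simp
  moreover have "H v u = H u v" using assms unfolding pd_kernel_def by blast
  ultimately show ?thesis by simp
qed

text \<open>For the laws \<open>Q\<^sub>i\<close> of \<open>x i + \<epsilon>\<close>, \<open>\<Sum>\<^sub>i\<^sub>j c i c j kme k Q\<^sub>i Q\<^sub>j\<close> is the double integral
  of \<open>shifted_form k I x c u v\<close> over independent \<open>u, v \<sim> \<epsilon>\<close>.\<close>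
definition shifted_form ::
    "('a::ab_group_add \<Rightarrow> 'a \<Rightarrow> real) \<Rightarrow> 'i set \<Rightarrow> ('i \<Rightarrow> 'a) \<Rightarrow> ('i \<Rightarrow> real) \<Rightarrow> 'a \<Rightarrow> 'a \<Rightarrow> real" where
  "shifted_form k I x c u v = (\<Sum>i\<in>I. \<Sum>j\<in>I. c i * c j * k (x i + u) (x j + v))"

lemma pd_kernel_shifted_form:
  assumes pd: "pd_kernel k" and I: "finite I"
  shows "pd_kernel (shifted_form k I x c)"
  unfolding pd_kernel_def
proof (intro conjI allI)
  have k_sym: "k u v = k v u" for u v using pd unfolding pd_kernel_def by blast
  fix u v
  have "shifted_form k I x c v u = (\<Sum>i\<in>I. \<Sum>j\<in>I. c j * c i * k (x j + v) (x i + u))"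
    unfolding shifted_form_def by (rule sum.swap)
  also have "\<dots> = shifted_form k I x c u v"
    unfolding shifted_form_def by (intro sum.cong refl) (metis k_sym mult.commute)
  finally show "shifted_form k I x c u v = shifted_form k I x c v u" by simp
next
  fix r :: nat and y :: "nat \<Rightarrow> 'a" and d :: "nat \<Rightarrow> real"
  define F where "F a i b j = (d a * c i) * (d b * c j) * k (x i + y a) (x j + y b)" for a i b j
  let ?T = "{..<r} \<times> I"
  have "(\<Sum>a<r. \<Sum>b<r. d a * d b * shifted_form k I x c (y a) (y b))
      = (\<Sum>a<r. \<Sum>b<r. \<Sum>i\<in>I. \<Sum>j\<in>I. F a i b j)"
    unfolding shifted_form_def F_def by (intro sum.cong refl) (simp add: sum_distrib_left mult_ac)
  also have "\<dots> = (\<Sum>a<r. \<Sum>i\<in>I. \<Sum>b<r. \<Sum>j\<in>I. F a i b j)"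
    by (intro sum.cong refl sum.swap)
  also have "\<dots> = (\<Sum>(a,i)\<in>?T. \<Sum>b<r. \<Sum>j\<in>I. F a i b j)"
    by (rule sum.cartesian_product)
  also have "\<dots> = (\<Sum>(a,i)\<in>?T. \<Sum>(b,j)\<in>?T. F a i b j)"
    by (rule sum.cong[OF refl]) (simp add: case_prod_unfold sum.cartesian_product)
  also have "0 \<le> \<dots>"
    using pd_kernel_sum_nonneg[OF pd, of ?T "\<lambda>(a,i). d a * c i" "\<lambda>(a,i). x i + y a"] I
    by (simp add: F_def case_prod_unfold)
  finally show "0 \<le> (\<Sum>a<r. \<Sum>b<r. d a * d b * shifted_form k I x c (y a) (y b))" .
qed

lemma shifted_form_diag:
  assumes "translation_invariant k"
  shows "shifted_form k I x c u u = shifted_form k I x c 0 0"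
proof -
  obtain \<psi> where "\<And>x y. k x y = \<psi> (x - y)" using assms unfolding translation_invariant_def by blast
  then show ?thesis unfolding shifted_form_def by simp
qed

lemma shifted_form_le:
  assumes "pd_kernel k" "finite I" "translation_invariant k"
  shows "shifted_form k I x c u v \<le> shifted_form k I x c 0 0"
  using pd_kernel_le_diag[OF pd_kernel_shifted_form[OF assms(1,2)], of x c u v]
    shifted_form_diag[OF assms(3), of I x c u] shifted_form_diag[OF assms(3), of I x c v]
  by simp

lemma shifted_form_bound:
  assumes "\<And>x y. \<bar>k x y\<bar> \<le> B"
  shows "\<bar>shifted_form k I x c u v\<bar> \<le> (\<Sum>i\<in>I. \<Sum>j\<in>I. \<bar>c i\<bar> * \<bar>c j\<bar> * B)"
proof -
  have "\<bar>shifted_form k I x c u v\<bar> \<le> (\<Sum>i\<in>I. \<Sum>j\<in>I. \<bar>c i * c j * k (x i + u) (x j + v)\<bar>)"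
    unfolding shifted_form_def by (intro order.trans[OF sum_abs] sum_mono sum_abs)
  also have "\<dots> \<le> (\<Sum>i\<in>I. \<Sum>j\<in>I. \<bar>c i\<bar> * \<bar>c j\<bar> * B)"
    by (intro sum_mono) (simp add: abs_mult assms mult_left_mono)
  finally show ?thesis .
qed

text \<open>The expectation of \<open>\<Sum>\<^sub>a\<^sub>,\<^sub>b H(Y\<^sub>a, Y\<^sub>b)\<close> when the list \<open>ys\<close> is extended by \<open>s\<close>
  independent samples from \<open>M\<close>.\<close>
fun expected_gram_sum :: "'a measure \<Rightarrow> ('a \<Rightarrow> 'a \<Rightarrow> real) \<Rightarrow> 'a list \<Rightarrow> nat \<Rightarrow> real" where
  "expected_gram_sum M H ys 0 = (\<Sum>a<length ys. \<Sum>b<length ys. H (ys!a) (ys!b))"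
| "expected_gram_sum M H ys (Suc s) = (\<integral>e. expected_gram_sum M H (ys @ [e]) s \<partial>M)"

lemma expected_gram_sum_nonneg:
  assumes "pd_kernel H"
  shows "0 \<le> expected_gram_sum M H ys s"
proof (induction s arbitrary: ys)
  case 0
  show ?case
    using pd_kernel_sum_nonneg[OF assms, of "{..<length ys}" "\<lambda>_. 1" "nth ys"] by simp
next
  case (Suc s)
  then show ?case by (simp add: Bochner_Integration.integral_nonneg)
qed

context prob_space
begin

lemma integrable_inner_integral:
  fixes H :: "'a \<Rightarrow> 'a \<Rightarrow> real"
  assumes H: "(\<lambda>(u,v). H u v) \<in> borel_measurable (M \<Otimes>\<^sub>M M)" and bound: "\<And>u v. \<bar>H u v\<bar> \<le> C"
  shows "integrable M (\<lambda>u. \<integral>v. H u v \<partial>M)"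
proof -
  interpret MM: pair_prob_space M M
    by (simp add: pair_prob_space_def pair_sigma_finite_def prob_space_axioms prob_space_imp_sigma_finite)
  have "integrable (M \<Otimes>\<^sub>M M) (\<lambda>(u,v). H u v)"
    by (rule MM.P.integrable_const_bound[where B=C]) (use H bound in auto)
  from MM.integrable_fst'[OF this] show ?thesis by simp
qed

lemma integral_integral_le_const:
  fixes H :: "'a \<Rightarrow> 'a \<Rightarrow> real"
  assumes H: "(\<lambda>(u,v). H u v) \<in> borel_measurable (M \<Otimes>\<^sub>M M)" and H_section: "\<And>u. H u \<in> borel_measurable M"
    and bound: "\<And>u v. \<bar>H u v\<bar> \<le> C" and le: "\<And>u v. H u v \<le> q"
  shows "(\<integral>u. (\<integral>v. H u v \<partial>M) \<partial>M) \<le> q"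
proof -
  have inner_le: "(\<integral>v. H u v \<partial>M) \<le> q" for u
    by (intro integral_le_const integrable_const_bound[where B=C] AE_I2) (use H_section bound le in auto)
  show ?thesis
    by (intro integral_le_const[OF integrable_inner_integral[OF H bound]] AE_I2 inner_le)
qed

lemma expected_gram_sum_eq:
  fixes H :: "'a \<Rightarrow> 'a \<Rightarrow> real"
  assumes H: "(\<lambda>(u,v). H u v) \<in> borel_measurable (M \<Otimes>\<^sub>M M)" and H_section: "\<And>u. H u \<in> borel_measurable M"
    and bound: "\<And>u v. \<bar>H u v\<bar> \<le> C"
    and sym: "\<And>u v. H u v = H v u" and diag: "\<And>u. H u u = q"
  shows "expected_gram_sum M H ys s = (\<Sum>a<length ys. \<Sum>b<length ys. H (ys!a) (ys!b))
    + 2 * real s * (\<Sum>a<length ys. \<integral>v. H (ys!a) v \<partial>M) + real s * q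
    + real s * (real s - 1) * (\<integral>u. (\<integral>v. H u v \<partial>M) \<partial>M)"
proof (induction s arbitrary: ys)
  case 0
  show ?case by simp
next
  case (Suc s)
  define g where "g u = (\<integral>v. H u v \<partial>M)" for u
  define I where "I = (\<integral>u. g u \<partial>M)"
  define r where "r = length ys"
  define K where "K = (\<Sum>a<r. \<Sum>b<r. H (ys!a) (ys!b)) + q + 2 * real s * (\<Sum>a<r. g (ys!a))
    + real s * q + real s * (real s - 1) * I"
  have H_int: "integrable M (H u)" for u
    by (rule integrable_const_bound[where B=C]) (use H_section bound in auto)
  have gram_append: "(\<Sum>a<length (ys@[e]). \<Sum>b<length (ys@[e]). H ((ys@[e])!a) ((ys@[e])!b))
      = (\<Sum>a<r. \<Sum>b<r. H (ys!a) (ys!b)) + 2 * (\<Sum>a<r. H (ys!a) e) + q" for e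
  proof -
    have "(\<Sum>b<r. H e (ys!b)) = (\<Sum>a<r. H (ys!a) e)" using sym by (intro sum.cong) auto
    then show ?thesis by (simp add: r_def nth_append sum.distrib diag)
  qed
  have pointwise: "expected_gram_sum M H (ys@[e]) s = K + (2 * (\<Sum>a<r. H (ys!a) e) + 2 * real s * g e)"
    for e
  proof -
    have "(\<Sum>a<length (ys@[e]). g ((ys@[e])!a)) = (\<Sum>a<r. g (ys!a)) + g e"
      by (simp add: r_def nth_append)
    then show ?thesis
      unfolding Suc.IH gram_append g_def[symmetric] I_def[symmetric] K_def by (simp add: algebra_simps)
  qed
  have "expected_gram_sum M H ys (Suc s)
      = (\<integral>e. K + (2 * (\<Sum>a<r. H (ys!a) e) + 2 * real s * g e) \<partial>M)"
    by (simp only: expected_gram_sum.simps pointwise)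
  also have "\<dots> = K + (2 * (\<Sum>a<r. g (ys!a)) + 2 * real s * I)"
    using H_int integrable_inner_integral[OF H bound] prob_space
    by (simp add: g_def I_def Bochner_Integration.integral_sum)
  finally show ?case by (simp add: K_def g_def I_def r_def algebra_simps)
qed

text \<open>\<open>m q + m (m - 1) I\<close> is an expected gram sum, hence nonnegative, for every \<open>m\<close>.\<close>
lemma integral_integral_nonneg_pd_kernel:
  fixes H :: "'a \<Rightarrow> 'a \<Rightarrow> real"
  assumes H: "(\<lambda>(u,v). H u v) \<in> borel_measurable (M \<Otimes>\<^sub>M M)" and H_section: "\<And>u. H u \<in> borel_measurable M"
    and bound: "\<And>u v. \<bar>H u v\<bar> \<le> C"
    and pd: "pd_kernel H" and diag: "\<And>u. H u u = q"
  shows "0 \<le> (\<integral>u. (\<integral>v. H u v \<partial>M) \<partial>M)" (is "0 \<le> ?I")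
proof (rule ccontr)
  assume "\<not> 0 \<le> ?I"
  then have I: "?I < 0" by simp
  have "0 \<le> H u u" for u
    using pd_kernel_sum_nonneg[OF pd, of "{u}" "\<lambda>_. 1" id] by simp
  then have q: "0 \<le> q" using diag by metis
  obtain m :: nat where m: "q / - ?I + 2 < real m" using reals_Archimedean2 by blast
  then have m_pos: "0 < real m" using q I by (smt (verit) divide_nonneg_pos)
  have "q / - ?I < real m - 1" using m by simp
  then have "q < (real m - 1) * - ?I" using I pos_divide_less_eq[of "- ?I" q "real m - 1"] by simp
  then have "real m * (q + (real m - 1) * ?I) < 0"
    by (intro mult_pos_neg[OF m_pos]) (simp add: algebra_simps)
  moreover have "expected_gram_sum M H [] m = real m * (q + (real m - 1) * ?I)"
    using expected_gram_sum_eq[OF H H_section bound _ diag] pd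
    by (simp add: pd_kernel_def algebra_simps)
  ultimately show False using expected_gram_sum_nonneg[OF pd, of M "[]" m] by simp
qed

end

lemma measurable_continuous_sets_borel:
  assumes "continuous_on UNIV f" "sets M = sets borel"
  shows "f \<in> borel_measurable M"
  using borel_measurable_continuous_onI[OF assms(1)] measurable_cong_sets[OF assms(2) refl] by blast

lemma measurable_pair_continuous_sets_borel:
  fixes f :: "'a::euclidean_space \<times> 'a \<Rightarrow> real"
  assumes "continuous_on UNIV f" "sets M1 = sets borel" "sets M2 = sets borel"
  shows "f \<in> borel_measurable (M1 \<Otimes>\<^sub>M M2)"
proof -
  have "sets (M1 \<Otimes>\<^sub>M M2) = sets (borel \<Otimes>\<^sub>M borel)"
    by (rule sets_pair_measure_cong) (use assms in auto)
  also have "\<dots> = sets borel" by (metis borel_prod)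
  finally show ?thesis by (rule measurable_continuous_sets_borel[OF assms(1)])
qed

lemma continuous_on_section:
  assumes "continuous_on UNIV (\<lambda>(x, y). f x y)"
  shows "continuous_on UNIV (f u)"
proof -
  have "continuous_on UNIV (\<lambda>v. (\<lambda>(x, y). f x y) (u, v))"
    by (rule continuous_on_compose2[OF assms]) (auto intro!: continuous_intros)
  then show ?thesis by simp
qed

lemma continuous_on_shifted_kernel:
  fixes k :: "'a::real_normed_vector \<Rightarrow> 'a \<Rightarrow> real"
  assumes "continuous_on UNIV (\<lambda>(x, y). k x y)"
  shows "continuous_on UNIV (\<lambda>(u, v). k (a + u) (b + v))"
proof -
  have "continuous_on UNIV (\<lambda>p. (\<lambda>(x, y). k x y) (a + fst p, b + snd p))"
    by (rule continuous_on_compose2[OF assms]) (auto intro!: continuous_intros)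
  then show ?thesis by (simp add: case_prod_beta')
qed

lemma continuous_on_shifted_form:
  fixes k :: "'a::real_normed_vector \<Rightarrow> 'a \<Rightarrow> real"
  assumes "continuous_on UNIV (\<lambda>(x, y). k x y)"
  shows "continuous_on UNIV (\<lambda>(u, v). shifted_form k I x c u v)"
  unfolding shifted_form_def case_prod_beta'
  by (intro continuous_intros continuous_on_shifted_kernel[OF assms, unfolded case_prod_beta'])

lemma kme_distr_shift:
  fixes k :: "'a::euclidean_space \<Rightarrow> 'a \<Rightarrow> real"
  assumes P: "prob_space P" "sets P = sets borel" and k_cont: "continuous_on UNIV (\<lambda>(x, y). k x y)"
  shows "kme k (distr P borel (\<lambda>e. a + e)) (distr P borel (\<lambda>e. b + e))
    = (\<integral>e. (\<integral>e'. k (a + e) (b + e') \<partial>P) \<partial>P)"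
proof -
  interpret prob_space P by (rule P(1))
  have shift: "(\<lambda>e. a + e) \<in> measurable P borel" for a :: 'a
    by (rule measurable_continuous_sets_borel[OF _ P(2)]) (auto intro!: continuous_intros)
  have "continuous_on UNIV (\<lambda>(u, e'). k u (b + e'))"
    using continuous_on_shifted_kernel[OF k_cont, of 0 b] by simp
  then have "(\<lambda>(u, e'). k u (b + e')) \<in> borel_measurable (borel \<Otimes>\<^sub>M P)"
    by (rule measurable_pair_continuous_sets_borel[OF _ refl P(2)])
  then have outer: "(\<lambda>u. \<integral>e'. k u (b + e') \<partial>P) \<in> borel_measurable borel"
    by (rule borel_measurable_lebesgue_integral)
  have "k u \<in> borel_measurable borel" for u
    by (rule measurable_continuous_sets_borel[OF continuous_on_section[OF k_cont] refl])
  then have "(\<integral>v. k u v \<partial>distr P borel (\<lambda>e. b + e)) = (\<integral>e'. k u (b + e') \<partial>P)" for u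
    by (intro integral_distr shift)
  then show ?thesis
    unfolding kme_def by (simp add: integral_distr[OF shift outer])
qed

lemma kme_commute:
  fixes k :: "'a::euclidean_space \<Rightarrow> 'a \<Rightarrow> real"
  assumes P: "prob_space P" "sets P = sets borel" and Q: "prob_space Q" "sets Q = sets borel"
    and k_cont: "continuous_on UNIV (\<lambda>(x, y). k x y)" and k_bound: "\<And>x y. \<bar>k x y\<bar> \<le> B"
    and k_sym: "\<And>x y. k x y = k y x"
  shows "kme k P Q = kme k Q P"
proof -
  interpret PQ: pair_prob_space P Q
    by (simp add: pair_prob_space_def pair_sigma_finite_def P Q prob_space_imp_sigma_finite)
  have "integrable (P \<Otimes>\<^sub>M Q) (\<lambda>(x, y). k x y)"
    using measurable_pair_continuous_sets_borel[OF k_cont P(2) Q(2)] k_bound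
    by (intro PQ.P.integrable_const_bound[where B=B]) auto
  then have "(\<integral>y. (\<integral>x. k x y \<partial>P) \<partial>Q) = (\<integral>x. (\<integral>y. k x y \<partial>Q) \<partial>P)"
    by (rule PQ.Fubini_integral)
  then show ?thesis unfolding kme_def by (simp add: k_sym)
qed

lemma kme_quad_form:
  fixes k :: "'a::euclidean_space \<Rightarrow> 'a \<Rightarrow> real"
  assumes P: "prob_space P" "sets P = sets borel"
    and k_cont: "continuous_on UNIV (\<lambda>(x, y). k x y)" and k_bound: "\<And>x y. \<bar>k x y\<bar> \<le> B"
  shows "(\<Sum>i\<in>I. \<Sum>j\<in>I. c i * c j * kme k (distr P borel (\<lambda>e. x i + e)) (distr P borel (\<lambda>e. x j + e)))
    = (\<integral>u. (\<integral>v. shifted_form k I x c u v \<partial>P) \<partial>P)"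
proof -
  interpret prob_space P by (rule P(1))
  have meas: "(\<lambda>(u,v). k (x i + u) (x j + v)) \<in> borel_measurable (P \<Otimes>\<^sub>M P)" for i j
    by (rule measurable_pair_continuous_sets_borel[OF continuous_on_shifted_kernel[OF k_cont] P(2) P(2)])
  have "(\<lambda>v. k (x i + u) (x j + v)) \<in> borel_measurable P" for i j u
    using measurable_continuous_sets_borel[OF continuous_on_section[OF continuous_on_shifted_kernel[OF k_cont]] P(2)]
    by simp
  then have "integrable P (\<lambda>v. k (x i + u) (x j + v))" for i j u
    by (intro integrable_const_bound[where B=B]) (auto simp: k_bound)
  then have "(\<integral>u. (\<integral>v. shifted_form k I x c u v \<partial>P) \<partial>P)
      = (\<integral>u. (\<Sum>i\<in>I. \<Sum>j\<in>I. c i * c j * (\<integral>v. k (x i + u) (x j + v) \<partial>P)) \<partial>P)"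
    unfolding shifted_form_def by simp
  also have "\<dots> = (\<Sum>i\<in>I. \<Sum>j\<in>I. c i * c j * (\<integral>u. (\<integral>v. k (x i + u) (x j + v) \<partial>P) \<partial>P))"
    using integrable_inner_integral[OF meas k_bound] by simp
  finally show ?thesis
    unfolding kme_distr_shift[OF P k_cont] ..
qed

lemma kme_quad_form_bounds:
  fixes k :: "'a::euclidean_space \<Rightarrow> 'a \<Rightarrow> real"
  assumes P: "prob_space P" "sets P = sets borel"
    and k_cont: "continuous_on UNIV (\<lambda>(x, y). k x y)" and k_bound: "\<And>x y. \<bar>k x y\<bar> \<le> B"
    and pd: "pd_kernel k" and ti: "translation_invariant k" and I: "finite I"
  shows "0 \<le> (\<Sum>i\<in>I. \<Sum>j\<in>I. c i * c j * kme k (distr P borel (\<lambda>e. x i + e)) (distr P borel (\<lambda>e. x j + e)))"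
    and "(\<Sum>i\<in>I. \<Sum>j\<in>I. c i * c j * kme k (distr P borel (\<lambda>e. x i + e)) (distr P borel (\<lambda>e. x j + e)))
      \<le> (\<Sum>i\<in>I. \<Sum>j\<in>I. c i * c j * k (x i) (x j))"
proof -
  let ?F = "\<Sum>i\<in>I. \<Sum>j\<in>I. c i * c j * kme k (distr P borel (\<lambda>e. x i + e)) (distr P borel (\<lambda>e. x j + e))"
  let ?H = "shifted_form k I x c"
  have meas: "(\<lambda>(u,v). ?H u v) \<in> borel_measurable (P \<Otimes>\<^sub>M P)"
    by (rule measurable_pair_continuous_sets_borel[OF continuous_on_shifted_form[OF k_cont] P(2) P(2)])
  have H_section: "?H u \<in> borel_measurable P" for u
    by (rule measurable_continuous_sets_borel[OF continuous_on_section[OF continuous_on_shifted_form[OF k_cont]] P(2)])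
  note bound = shifted_form_bound[OF k_bound]
  have F: "?F = (\<integral>u. (\<integral>v. ?H u v \<partial>P) \<partial>P)"
    by (rule kme_quad_form[OF P k_cont k_bound])
  show "0 \<le> ?F" unfolding F
    by (rule prob_space.integral_integral_nonneg_pd_kernel[OF P(1) meas H_section bound
          pd_kernel_shifted_form[OF pd I] shifted_form_diag[OF ti]])
  have "?F \<le> ?H 0 0" unfolding F
    by (rule prob_space.integral_integral_le_const[OF P(1) meas H_section bound
          shifted_form_le[OF pd I ti]])
  then show "?F \<le> (\<Sum>i\<in>I. \<Sum>j\<in>I. c i * c j * k (x i) (x j))"
    by (simp add: shifted_form_def)
qed

lemma info_gain_kme_le:
  fixes k :: "'a::euclidean_space \<Rightarrow> 'a \<Rightarrow> real"
  assumes P: "prob_space P" "sets P = sets borel"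
    and k_cont: "continuous_on UNIV (\<lambda>(x, y). k x y)" and k_bound: "\<And>x y. \<bar>k x y\<bar> \<le> B"
    and pd: "pd_kernel k" and ti: "translation_invariant k" and lam: "lam > 0"
    and R: "finite R" and law: "\<And>Q. Q \<in> R \<Longrightarrow> distr P borel (\<lambda>e. x Q + e) = Q"
  shows "info_gain (kme k) lam R \<le> info_gain (\<lambda>a b. k (x a) (x b)) lam R"
proof (rule info_gain_mono[OF R lam])
  have k_sym: "k u v = k v u" for u v using pd unfolding pd_kernel_def by blast
  have "(\<lambda>e. a + e) \<in> measurable P borel" for a
    by (rule measurable_continuous_sets_borel[OF _ P(2)]) (auto intro!: continuous_intros)
  then have "prob_space (distr P borel (\<lambda>e. a + e))" for a
    by (rule prob_space.prob_space_distr[OF P(1)])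
  then have "prob_space Q" "sets Q = sets borel" if "Q \<in> R" for Q
    by (metis law[OF that], metis law[OF that] sets_distr)
  then show "kme k Q Q' = kme k Q' Q" if "Q \<in> R" "Q' \<in> R" for Q Q'
    using that by (intro kme_commute[OF _ _ _ _ k_cont k_bound k_sym]) auto
  show "k (x a) (x b) = k (x b) (x a)" for a b by (rule k_sym)
  have form: "(\<Sum>Q\<in>R. \<Sum>Q'\<in>R. c Q * c Q' * kme k Q Q')
      = (\<Sum>Q\<in>R. \<Sum>Q'\<in>R. c Q * c Q' * kme k (distr P borel (\<lambda>e. x Q + e)) (distr P borel (\<lambda>e. x Q' + e)))"
    for c by (intro sum.cong refl) (simp add: law)
  show "0 \<le> (\<Sum>Q\<in>R. \<Sum>Q'\<in>R. c Q * c Q' * kme k Q Q')" for c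
    unfolding form by (rule kme_quad_form_bounds(1)[OF P k_cont k_bound pd ti R])
  show "(\<Sum>Q\<in>R. \<Sum>Q'\<in>R. c Q * c Q' * kme k Q Q') \<le> (\<Sum>Q\<in>R. \<Sum>Q'\<in>R. c Q * c Q' * k (x Q) (x Q'))" for c
    unfolding form by (rule kme_quad_form_bounds(2)[OF P k_cont k_bound pd ti R])
qed

theorem proposition3:
  fixes S :: "(real ^ 'd) set"
    and Peps :: "(real ^ 'd) measure"
    and k :: "real ^ 'd \<Rightarrow> real ^ 'd \<Rightarrow> real"
    and lam :: real
  assumes "compact S"
    and "prob_space Peps" and "sets Peps = sets borel"
    and "integrable Peps (\<lambda>e. e)" and "(\<integral>e. e \<partial>Peps) = 0"
    and "continuous_on UNIV (\<lambda>(x, y). k x y)"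
    and "\<exists>B. \<forall>x y. \<bar>k x y\<bar> \<le> B"
    and "translation_invariant k"
    and "pd_kernel k"
    and "\<forall>x. k x x \<le> 1"
    and "lam > 0"
  shows "\<forall>n\<ge>1. max_info_gain (kme k) lam (noisy_laws S Peps) n \<le> max_info_gain k lam S n"
proof (intro allI impI)
  fix n :: nat
  obtain B where k_bound: "\<And>x y. \<bar>k x y\<bar> \<le> B" using assms(7) by blast
  show "max_info_gain (kme k) lam (noisy_laws S Peps) n \<le> max_info_gain k lam S n"
    unfolding max_info_gain_def
  proof (rule SUP_least)
    fix R assume "R \<in> {A. A \<subseteq> noisy_laws S Peps \<and> finite A \<and> card A = n}"
    then have R: "R \<subseteq> noisy_laws S Peps" "finite R" "card R = n" by auto
    have centres: "\<forall>Q\<in>R. \<exists>a. a \<in> S \<and> distr Peps borel (\<lambda>e. a + e) = Q"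
      using R(1) unfolding noisy_laws_def by blast
    obtain x where x: "\<forall>Q\<in>R. x Q \<in> S \<and> distr Peps borel (\<lambda>e. x Q + e) = Q"
      using bchoice[OF centres] by blast
    have inj: "inj_on x R"
    proof (rule inj_onI)
      fix Q Q' assume "Q \<in> R" "Q' \<in> R" "x Q = x Q'"
      then have "distr Peps borel (\<lambda>e. x Q + e) = Q" "distr Peps borel (\<lambda>e. x Q' + e) = Q'"
        using x by blast+
      with \<open>x Q = x Q'\<close> show "Q = Q'" by metis
    qed
    have "info_gain (kme k) lam R \<le> info_gain (\<lambda>a b. k (x a) (x b)) lam R"
      by (rule info_gain_kme_le[OF assms(2,3,6) k_bound assms(9,8,11) R(2)]) (use x in blast)
    also have "\<dots> = info_gain k lam (x ` R)"
      by (rule info_gain_reindex[OF inj R(2), symmetric])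
    moreover have "x ` R \<in> {A. A \<subseteq> S \<and> finite A \<and> card A = n}"
      using x R(2,3) card_image[OF inj] by blast
    ultimately show "ereal (info_gain (kme k) lam R)
        \<le> (SUP A\<in>{A. A \<subseteq> S \<and> finite A \<and> card A = n}. ereal (info_gain k lam A))"
      by (intro SUP_upper2[of "x ` R"]) auto
  qed
qed

end
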